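(* Fix $\lambda_t\in\mathbb{R}^m_+$ and $h\in[0,1)$. For each deterministic policy $\pi$ define $\mathcal{T}^\pi_1:\mathbb{R}^{\mathcal{S}}\to\mathbb{R}^{\mathcal{S}}$ by $$[\mathcal{T}_1^\pi v](s) = [\mathcal{T}^\pi v](s) - \gamma h\langle P^o_{s,\pi(s)}, v - V^\pi_r + \lambda_t^\top V^\pi_g\rangle,$$ where $\mathcal{T}^\pi$ is the operator defined below. Then: (1) (Monotonicity) if $v_1\ge v_2$ componentwise then $\mathcal{T}_1^\pi v_1\ge\mathcal{T}_1^\pi v_2$; (2) (Transition invariance) for every $c\in\mathbb{R}$, $\mathcal{T}_1^\pi(v+c\mathbf{1}) = \mathcal{T}_1^\pi v + \gamma(1-h)c\mathbf{1}$; (3) (Contraction) $\mathcal{T}_1^\pi$ is a $\gamma(1-h)$-contraction in $\|\cdot\|_\infty$, and $V^\pi_r - \lambda_t^\top V^\pi_g$ is its unique fixed point.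
   Context: $\mathcal{S},\mathcal{A}$ finite, $\gamma\in[0,1)$. $P^o$ is a nominal kernel and $\mathcal{P}=\otimes_{(s,a)}\mathcal{P}_{s,a}$ an $(s,a)$-rectangular uncertainty set, $\mathcal{P}_{s,a}=\{P\in\Delta(\mathcal{S}):D(P,P^o_{s,a})\le\beta_{s,a}\}$ (minima over these sets taken to be attained). $r:\mathcal{S}\times\mathcal{A}\to[0,\bar R]$, $g=(g_1,\dots,g_m)$ with $g_i:\mathcal{S}\times\mathcal{A}\to[0,\tau_i]$. Policies $\pi:\mathcal{S}\to\mathcal{A}$ are deterministic and stationary. Robust values: $V^\pi_u(s)=\min_{\mathcal{K}\in\otimes_{t\ge0}\mathcal{P}}\mathbb{E}_{\mathcal{K}}[\sum_{t\ge0}\gamma^tu(s_t,a_t)\mid s_0=s,\pi]$ (worst case over sequences of kernels from $\mathcal{P}$), $V^\pi_g=(V^\pi_{g_i})_i$. The operator $\mathcal{T}^\pi$ is $[\mathcal{T}^{\pi} v](s) = (r - \lambda_t^{\top}g)(s, \pi(s)) + \gamma \langle P^o_{s, \pi(s)}, v \rangle + \gamma \min_{P_{s,\pi(s)} \in \mathcal{P}_{s,\pi(s)}} \langle P_{s, \pi(s)} - P^o_{s, \pi(s)}, V^{\pi}_{r} \rangle - \gamma \lambda_t^{\top} \min_{P_{s,\pi(s)} \in \mathcal{P}_{s,\pi(s)}} \langle P_{s, \pi(s)} - P^o_{s, \pi(s)}, V^{\pi}_{g} \rangle$, with the last minimum taken componentwise over the $g_i$ and with $V^\pi_r,V^\pi_g$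 fixed (independent of $v$). *)

theory Defs
  imports "HOL-Analysis.Analysis"
begin

text \<open>The constraint index set is {..<m}.\<close>

definition prob_simplex :: "('s::finite \<Rightarrow> real) set" where
  "prob_simplex = {p. (\<forall>s. 0 \<le> p s) \<and> (\<Sum>s\<in>UNIV. p s) = 1}"

definition ip :: "('s::finite \<Rightarrow> real) \<Rightarrow> ('s \<Rightarrow> real) \<Rightarrow> real" where
  "ip p v = (\<Sum>s\<in>UNIV. p s * v s)"

definition unc_set ::
  "(('s::finite \<Rightarrow> real) \<Rightarrow> ('s \<Rightarrow> real) \<Rightarrow> real) \<Rightarrow> ('s \<Rightarrow> 'a \<Rightarrow> real)
   \<Rightarrow> ('s \<Rightarrow> 'a \<Rightarrow> 's \<Rightarrow> real) \<Rightarrow> 's \<Rightarrow> 'a \<Rightarrow> ('s \<Rightarrow> real) set" where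
  "unc_set D \<beta> Po s a = {P \<in> prob_simplex. D P (Po s a) \<le> \<beta> s a}"

text \<open>State distribution at time t under a sequence of kernels K (K t is the kernel
  used at step t), deterministic stationary policy pi, starting in s0.\<close>
fun state_dist ::
  "(nat \<Rightarrow> 's::finite \<Rightarrow> 'a \<Rightarrow> 's \<Rightarrow> real) \<Rightarrow> ('s \<Rightarrow> 'a) \<Rightarrow> 's \<Rightarrow> nat \<Rightarrow> 's \<Rightarrow> real" where
  "state_dist K \<pi> s0 0 = (\<lambda>s. if s = s0 then 1 else 0)"
| "state_dist K \<pi> s0 (Suc t) =
     (\<lambda>s'. \<Sum>s\<in>UNIV. state_dist K \<pi> s0 t s * K t s (\<pi> s) s')"

definition disc_return ::
  "real \<Rightarrow> (nat \<Rightarrow> 's::finite \<Rightarrow> 'a \<Rightarrow> 's \<Rightarrow> real) \<Rightarrow> ('s \<Rightarrow> 'a) \<Rightarrow> ('s \<Rightarrow> 'a \<Rightarrow> real)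
   \<Rightarrow> 's \<Rightarrow> real" where
  "disc_return \<gamma> K \<pi> u s0 =
     (\<Sum>t. \<gamma> ^ t * (\<Sum>s\<in>UNIV. state_dist K \<pi> s0 t s * u s (\<pi> s)))"

definition robust_value ::
  "(('s::finite \<Rightarrow> real) \<Rightarrow> ('s \<Rightarrow> real) \<Rightarrow> real) \<Rightarrow> ('s \<Rightarrow> 'a \<Rightarrow> real)
   \<Rightarrow> ('s \<Rightarrow> 'a \<Rightarrow> 's \<Rightarrow> real) \<Rightarrow> real \<Rightarrow> ('s \<Rightarrow> 'a) \<Rightarrow> ('s \<Rightarrow> 'a \<Rightarrow> real) \<Rightarrow> 's \<Rightarrow> real" where
  "robust_value D \<beta> Po \<gamma> \<pi> u s0 =
     (INF K \<in> {K. \<forall>t s a. K t s a \<in> unc_set D \<beta> Po s a}. disc_return \<gamma> K \<pi> u s0)"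

definition min_dev ::
  "(('s::finite \<Rightarrow> real) \<Rightarrow> ('s \<Rightarrow> real) \<Rightarrow> real) \<Rightarrow> ('s \<Rightarrow> 'a \<Rightarrow> real)
   \<Rightarrow> ('s \<Rightarrow> 'a \<Rightarrow> 's \<Rightarrow> real) \<Rightarrow> 's \<Rightarrow> 'a \<Rightarrow> ('s \<Rightarrow> real) \<Rightarrow> real" where
  "min_dev D \<beta> Po s a V = (INF P \<in> unc_set D \<beta> Po s a. ip (\<lambda>s'. P s' - Po s a s') V)"

definition T_op ::
  "(('s::finite \<Rightarrow> real) \<Rightarrow> ('s \<Rightarrow> real) \<Rightarrow> real) \<Rightarrow> ('s \<Rightarrow> 'a \<Rightarrow> real)
   \<Rightarrow> ('s \<Rightarrow> 'a \<Rightarrow> 's \<Rightarrow> real) \<Rightarrow> real \<Rightarrow> ('s \<Rightarrow> 'a \<Rightarrow> real) \<Rightarrow> nat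
   \<Rightarrow> (nat \<Rightarrow> 's \<Rightarrow> 'a \<Rightarrow> real) \<Rightarrow> (nat \<Rightarrow> real) \<Rightarrow> ('s \<Rightarrow> 'a)
   \<Rightarrow> ('s \<Rightarrow> real) \<Rightarrow> 's \<Rightarrow> real" where
  "T_op D \<beta> Po \<gamma> r m g lam \<pi> v s =
     (r s (\<pi> s) - (\<Sum>i<m. lam i * g i s (\<pi> s)))
     + \<gamma> * ip (Po s (\<pi> s)) v
     + \<gamma> * min_dev D \<beta> Po s (\<pi> s) (robust_value D \<beta> Po \<gamma> \<pi> r)
     - \<gamma> * (\<Sum>i<m. lam i * min_dev D \<beta> Po s (\<pi> s) (robust_value D \<beta> Po \<gamma> \<pi> (g i)))"

definition T1_op ::
  "(('s::finite \<Rightarrow> real) \<Rightarrow> ('s \<Rightarrow> real) \<Rightarrow> real) \<Rightarrow> ('s \<Rightarrow> 'a \<Rightarrow> real)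
   \<Rightarrow> ('s \<Rightarrow> 'a \<Rightarrow> 's \<Rightarrow> real) \<Rightarrow> real \<Rightarrow> real \<Rightarrow> ('s \<Rightarrow> 'a \<Rightarrow> real) \<Rightarrow> nat
   \<Rightarrow> (nat \<Rightarrow> 's \<Rightarrow> 'a \<Rightarrow> real) \<Rightarrow> (nat \<Rightarrow> real) \<Rightarrow> ('s \<Rightarrow> 'a)
   \<Rightarrow> ('s \<Rightarrow> real) \<Rightarrow> 's \<Rightarrow> real" where
  "T1_op D \<beta> Po \<gamma> h r m g lam \<pi> v s =
     T_op D \<beta> Po \<gamma> r m g lam \<pi> v s
     - \<gamma> * h * ip (Po s (\<pi> s))
         (\<lambda>s'. v s' - robust_value D \<beta> Po \<gamma> \<pi> r s'
                + (\<Sum>i<m. lam i * robust_value D \<beta> Po \<gamma> \<pi> (g i) s'))"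

definition sup_norm :: "('s::finite \<Rightarrow> real) \<Rightarrow> real" where
  "sup_norm v = (MAX s. \<bar>v s\<bar>)"

end

theory Submission
  imports Defs
begin

text \<open>Unfolding the definitions, T1 v = T1 0 + \<gamma> (1 - h) A v with (A v) s = \<langle>Po s (\<pi> s), v\<rangle>.
  An affine map whose linear part is a nonnegative multiple of a stochastic matrix is monotone,
  commutes with constant shifts up to that factor and is Lipschitz with it in the sup norm; this
  gives everything except the fixed point. At V* the correction term added to T vanishes, and
  T V* = V* reduces by linearity to the robust Bellman equations V_u s = u s (\<pi> s) +
  \<gamma> min_P \<langle>P, V_u\<rangle> for u = r and u = g i. These hold because the worst case over
  non-stationary kernel sequences is attained by the stationary kernel that is greedy against V_u.\<close>

section \<open>Expectations under distributions\<close>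

lemma ip_diff_left: "ip (\<lambda>s. p s - q s) v = ip p v - ip q v"
  by (simp add: ip_def left_diff_distrib sum_subtractf)

lemma ip_diff_right: "ip p (\<lambda>s. v s - w s) = ip p v - ip p w"
  by (simp add: ip_def right_diff_distrib sum_subtractf)

lemma ip_add_right: "ip p (\<lambda>s. v s + w s) = ip p v + ip p w"
  by (simp add: ip_def distrib_left sum.distrib)

lemma ip_zero_right: "ip p (\<lambda>_. 0) = 0"
  by (simp add: ip_def)

lemma ip_sum_right: "ip p (\<lambda>s. \<Sum>i\<in>I. c i * f i s) = (\<Sum>i\<in>I. c i * ip p (f i))"
  unfolding ip_def sum_distrib_left by (rule sum.swap[THEN trans]) (simp add: mult_ac)

lemma ip_mono: "p \<in> prob_simplex \<Longrightarrow> (\<And>s. v s \<le> w s) \<Longrightarrow> ip p v \<le> ip p w"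
  unfolding ip_def prob_simplex_def by (auto intro!: sum_mono mult_left_mono)

lemma ip_const: "p \<in> prob_simplex \<Longrightarrow> ip p (\<lambda>_. c) = c"
  unfolding ip_def prob_simplex_def by (simp add: sum_distrib_right[symmetric])

lemma ip_add_const: "p \<in> prob_simplex \<Longrightarrow> ip p (\<lambda>s. v s + c) = ip p v + c"
  by (simp add: ip_add_right ip_const)

lemma ip_le_Max:
  assumes "p \<in> prob_simplex"
  shows "ip p v \<le> Max (range v)"
proof -
  have "ip p v \<le> ip p (\<lambda>_. Max (range v))"
    by (rule ip_mono[OF assms]) simp
  then show ?thesis
    using ip_const[OF assms] by simp
qed

lemma abs_le_sup_norm: "\<bar>v s\<bar> \<le> sup_norm v"
  unfolding sup_norm_def by (rule Max_ge) auto

lemma sup_norm_le: "(\<And>s. \<bar>v s\<bar> \<le> c) \<Longrightarrow> sup_norm v \<le> c"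
  unfolding sup_norm_def by (subst Max_le_iff) auto

lemma abs_ip_le_sup_norm:
  assumes "p \<in> prob_simplex"
  shows "\<bar>ip p v\<bar> \<le> sup_norm v"
proof -
  have "ip p v \<le> ip p (\<lambda>_. sup_norm v)"
    by (rule ip_mono[OF assms]) (metis abs_le_D1 abs_le_sup_norm)
  moreover have "ip p (\<lambda>_. - sup_norm v) \<le> ip p v"
    by (rule ip_mono[OF assms]) (metis abs_le_D2 abs_le_sup_norm minus_le_iff)
  ultimately show ?thesis
    using ip_const[OF assms] by (simp add: abs_le_iff)
qed

section \<open>Discounted returns\<close>

lemma state_dist_in_prob_simplex:
  assumes "\<And>t s a. K t s a \<in> prob_simplex"
  shows "state_dist K \<pi> s0 t \<in> prob_simplex"
proof (induction t)
  case 0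
  then show ?case by (simp add: prob_simplex_def)
next
  case (Suc t)
  have "(\<Sum>s'\<in>UNIV. state_dist K \<pi> s0 (Suc t) s')
        = (\<Sum>s\<in>UNIV. state_dist K \<pi> s0 t s * (\<Sum>s'\<in>UNIV. K t s (\<pi> s) s'))"
    unfolding state_dist.simps sum_distrib_left by (rule sum.swap)
  also have "\<dots> = 1"
    using Suc assms by (simp add: prob_simplex_def)
  finally show ?case
    using Suc assms by (auto simp: prob_simplex_def intro!: sum_nonneg)
qed

lemma state_dist_Suc_shift:
  "state_dist K \<pi> s0 (Suc t) s' =
     (\<Sum>s1\<in>UNIV. K 0 s0 (\<pi> s0) s1 * state_dist (\<lambda>t. K (Suc t)) \<pi> s1 t s')"
proof (induction t arbitrary: s')
  case 0
  show ?case
    by (simp add: if_distrib[where f = "\<lambda>x. x * _"] if_distrib[where f = "\<lambda>x. _ * x"] cong: if_cong)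
next
  case (Suc t)
  have "state_dist K \<pi> s0 (Suc (Suc t)) s'
        = (\<Sum>s\<in>UNIV. (\<Sum>s1\<in>UNIV. K 0 s0 (\<pi> s0) s1 * state_dist (\<lambda>t. K (Suc t)) \<pi> s1 t s)
                       * K (Suc t) s (\<pi> s) s')"
    using Suc.IH by simp
  also have "\<dots> = (\<Sum>s1\<in>UNIV. K 0 s0 (\<pi> s0) s1 *
                    (\<Sum>s\<in>UNIV. state_dist (\<lambda>t. K (Suc t)) \<pi> s1 t s * K (Suc t) s (\<pi> s) s'))"
    by (simp add: sum_distrib_left sum_distrib_right mult.assoc) (rule sum.swap)
  finally show ?case by simp
qed

lemma abs_expected_reward_le:
  assumes "\<And>t s a. K t s a \<in> prob_simplex"
  shows "\<bar>\<Sum>s\<in>UNIV. state_dist K \<pi> s0 t s * u s (\<pi> s)\<bar> \<le> sup_norm (\<lambda>s. u s (\<pi> s))"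
  using abs_ip_le_sup_norm[OF state_dist_in_prob_simplex[OF assms]] by (simp add: ip_def)

lemma summable_disc_return:
  assumes "\<And>t s a. K t s a \<in> prob_simplex" "0 \<le> \<gamma>" "\<gamma> < 1"
  shows "summable (\<lambda>t. \<gamma> ^ t * (\<Sum>s\<in>UNIV. state_dist K \<pi> s0 t s * u s (\<pi> s)))"
proof (rule summable_comparison_test)
  show "summable (\<lambda>t. \<gamma> ^ t * sup_norm (\<lambda>s. u s (\<pi> s)))"
    using assms by (intro summable_mult2 summable_geometric) simp
  show "\<exists>N. \<forall>t\<ge>N. norm (\<gamma> ^ t * (\<Sum>s\<in>UNIV. state_dist K \<pi> s0 t s * u s (\<pi> s)))
                   \<le> \<gamma> ^ t * sup_norm (\<lambda>s. u s (\<pi> s))"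
    using abs_expected_reward_le[where K = K, OF assms(1)] assms(2)
    by (auto simp: abs_mult intro!: mult_left_mono)
qed

lemma disc_return_lower_bound:
  assumes "\<And>t s a. K t s a \<in> prob_simplex" "0 \<le> \<gamma>" "\<gamma> < 1"
  shows "- sup_norm (\<lambda>s. u s (\<pi> s)) / (1 - \<gamma>) \<le> disc_return \<gamma> K \<pi> u s0"
proof -
  let ?B = "sup_norm (\<lambda>s. u s (\<pi> s))"
  have geom: "(\<lambda>t. \<gamma> ^ t * - ?B) sums (- ?B / (1 - \<gamma>))"
    using sums_mult2[OF geometric_sums, of \<gamma> "- ?B"] assms(2,3) by simp
  have "\<gamma> ^ t * - ?B \<le> \<gamma> ^ t * (\<Sum>s\<in>UNIV. state_dist K \<pi> s0 t s * u s (\<pi> s))" for t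
    using abs_expected_reward_le[where K = K, OF assms(1), of \<pi> s0 t u] assms(2)
    by (intro mult_left_mono) auto
  then show ?thesis
    unfolding disc_return_def
    using sums_le[OF _ geom summable_sums[OF summable_disc_return[where K = K, OF assms]]] by blast
qed

lemma disc_return_unfold:
  assumes "\<And>t s a. K t s a \<in> prob_simplex" "0 \<le> \<gamma>" "\<gamma> < 1"
  shows "disc_return \<gamma> K \<pi> u s0 =
           u s0 (\<pi> s0) + \<gamma> * ip (K 0 s0 (\<pi> s0)) (disc_return \<gamma> (\<lambda>t. K (Suc t)) \<pi> u)"
proof -
  let ?f = "\<lambda>t. \<gamma> ^ t * (\<Sum>s\<in>UNIV. state_dist K \<pi> s0 t s * u s (\<pi> s))"
  let ?g = "\<lambda>s1 t. \<gamma> ^ t * (\<Sum>s\<in>UNIV. state_dist (\<lambda>t. K (Suc t)) \<pi> s1 t s * u s (\<pi> s))"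
  have summable_f: "summable ?f"
    using assms by (rule summable_disc_return)
  have summable_g: "summable (?g s1)" for s1
    using assms by (intro summable_disc_return) auto
  have f_0: "?f 0 = u s0 (\<pi> s0)"
    by (simp add: if_distrib[where f = "\<lambda>x. x * _"] cong: if_cong)
  have f_Suc: "?f (Suc t) = \<gamma> * (\<Sum>s1\<in>UNIV. K 0 s0 (\<pi> s0) s1 * ?g s1 t)" for t
  proof -
    have "?f (Suc t) = \<gamma> * \<gamma> ^ t * (\<Sum>s\<in>UNIV. \<Sum>s1\<in>UNIV.
            K 0 s0 (\<pi> s0) s1 * state_dist (\<lambda>t. K (Suc t)) \<pi> s1 t s * u s (\<pi> s))"
      by (simp del: state_dist.simps add: state_dist_Suc_shift sum_distrib_right)
    also have "\<dots> = \<gamma> * (\<Sum>s1\<in>UNIV. K 0 s0 (\<pi> s0) s1 * ?g s1 t)"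
      by (subst sum.swap) (simp add: sum_distrib_left mult_ac)
    finally show ?thesis .
  qed
  have tail: "(\<Sum>t. ?f (Suc t)) = \<gamma> * (\<Sum>s1\<in>UNIV. K 0 s0 (\<pi> s0) s1 * suminf (?g s1))"
  proof -
    have summable_terms: "summable (\<lambda>t. K 0 s0 (\<pi> s0) s1 * ?g s1 t)" for s1
      by (rule summable_mult[OF summable_g])
    have "(\<Sum>t. ?f (Suc t)) = \<gamma> * (\<Sum>t. \<Sum>s1\<in>UNIV. K 0 s0 (\<pi> s0) s1 * ?g s1 t)"
      unfolding f_Suc by (rule suminf_mult[OF summable_sum[OF summable_terms]])
    also have "\<dots> = \<gamma> * (\<Sum>s1\<in>UNIV. \<Sum>t. K 0 s0 (\<pi> s0) s1 * ?g s1 t)"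
      by (simp only: suminf_sum[OF summable_terms])
    also have "\<dots> = \<gamma> * (\<Sum>s1\<in>UNIV. K 0 s0 (\<pi> s0) s1 * suminf (?g s1))"
      by (simp only: suminf_mult[OF summable_g])
    finally show ?thesis .
  qed
  have "suminf ?f = ?f 0 + (\<Sum>t. ?f (Suc t))"
    using suminf_split_head[OF summable_f] by linarith
  then show ?thesis
    unfolding disc_return_def ip_def f_0 tail .
qed

section \<open>The robust Bellman equation\<close>

definition admissible_kernels ::
  "(('s::finite \<Rightarrow> real) \<Rightarrow> ('s \<Rightarrow> real) \<Rightarrow> real) \<Rightarrow> ('s \<Rightarrow> 'a \<Rightarrow> real)
   \<Rightarrow> ('s \<Rightarrow> 'a \<Rightarrow> 's \<Rightarrow> real) \<Rightarrow> (nat \<Rightarrow> 's \<Rightarrow> 'a \<Rightarrow> 's \<Rightarrow> real) set" where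
  "admissible_kernels D \<beta> Po = {K. \<forall>t s a. K t s a \<in> unc_set D \<beta> Po s a}"

lemma robust_value_eq_INF:
  "robust_value D \<beta> Po \<gamma> \<pi> u s = (INF K \<in> admissible_kernels D \<beta> Po. disc_return \<gamma> K \<pi> u s)"
  unfolding robust_value_def admissible_kernels_def ..

lemma admissible_kernel_in_prob_simplex:
  "K \<in> admissible_kernels D \<beta> Po \<Longrightarrow> K t s a \<in> prob_simplex"
  unfolding admissible_kernels_def unc_set_def by auto

lemma admissible_kernels_shift:
  "K \<in> admissible_kernels D \<beta> Po \<Longrightarrow> (\<lambda>t. K (Suc t)) \<in> admissible_kernels D \<beta> Po"
  unfolding admissible_kernels_def by auto

lemma robust_value_le_disc_return:
  assumes "0 \<le> \<gamma>" "\<gamma> < 1" and K: "K \<in> admissible_kernels D \<beta> Po"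
  shows "robust_value D \<beta> Po \<gamma> \<pi> u s \<le> disc_return \<gamma> K \<pi> u s"
proof -
  have "- sup_norm (\<lambda>s. u s (\<pi> s)) / (1 - \<gamma>) \<le> disc_return \<gamma> K' \<pi> u s"
    if "K' \<in> admissible_kernels D \<beta> Po" for K'
    using admissible_kernel_in_prob_simplex[OF that] assms(1,2)
    by (rule disc_return_lower_bound[where K = K'])
  then have "bdd_below ((\<lambda>K. disc_return \<gamma> K \<pi> u s) ` admissible_kernels D \<beta> Po)"
    by (rule bdd_belowI2)
  then show ?thesis
    unfolding robust_value_eq_INF using K by (rule cINF_lower)
qed

lemma robust_value_ge_one_step:
  fixes D :: "('s::finite \<Rightarrow> real) \<Rightarrow> ('s \<Rightarrow> real) \<Rightarrow> real" and \<beta> :: "'s \<Rightarrow> 'a \<Rightarrow> real"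
    and Po :: "'s \<Rightarrow> 'a \<Rightarrow> 's \<Rightarrow> real" and \<gamma> :: real and \<pi> :: "'s \<Rightarrow> 'a"
    and u :: "'s \<Rightarrow> 'a \<Rightarrow> real"
  defines "V \<equiv> robust_value D \<beta> Po \<gamma> \<pi> u"
  assumes "0 \<le> \<gamma>" "\<gamma> < 1" and nonempty: "admissible_kernels D \<beta> Po \<noteq> {}"
    and P_min: "\<And>Q. Q \<in> unc_set D \<beta> Po s (\<pi> s) \<Longrightarrow> ip P V \<le> ip Q V"
  shows "u s (\<pi> s) + \<gamma> * ip P V \<le> V s"
proof -
  have V_eq: "V s = (INF K \<in> admissible_kernels D \<beta> Po. disc_return \<gamma> K \<pi> u s)"
    unfolding V_def by (rule robust_value_eq_INF)
  show ?thesis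
    unfolding V_eq
  proof (rule cINF_greatest[OF nonempty])
    fix K assume K: "K \<in> admissible_kernels D \<beta> Po"
    have "ip P V \<le> ip (K 0 s (\<pi> s)) V"
      using K unfolding admissible_kernels_def by (intro P_min) auto
    also have "\<dots> \<le> ip (K 0 s (\<pi> s)) (disc_return \<gamma> (\<lambda>t. K (Suc t)) \<pi> u)"
      unfolding V_def using assms(2,3) K
      by (intro ip_mono admissible_kernel_in_prob_simplex robust_value_le_disc_return
          admissible_kernels_shift)
    finally show "u s (\<pi> s) + \<gamma> * ip P V \<le> disc_return \<gamma> K \<pi> u s"
      using disc_return_unfold[where K = K, OF admissible_kernel_in_prob_simplex[OF K] assms(2,3)]
        assms(2)
      by (simp add: mult_left_mono)
  qed
qed

lemma nonpos_if_le_discounted_average: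
  fixes e :: "'s::finite \<Rightarrow> real"
  assumes "\<And>s. p s \<in> prob_simplex" "0 \<le> \<gamma>" "\<gamma> < 1"
    and e_le: "\<And>s. e s \<le> \<gamma> * ip (p s) e"
  shows "e s \<le> 0"
proof -
  define M where "M = Max (range e)"
  have "M \<in> range e"
    unfolding M_def by (rule Max_in) auto
  then obtain s0 where "e s0 = M"
    by auto
  have "\<gamma> * ip (p s0) e \<le> \<gamma> * M"
    unfolding M_def using ip_le_Max[OF assms(1)] assms(2) by (rule mult_left_mono)
  with \<open>e s0 = M\<close> e_le[of s0] have "M \<le> \<gamma> * M"
    by simp
  then have "(1 - \<gamma>) * M \<le> 0"
    by (simp add: algebra_simps)
  then have "M \<le> 0"
    using assms(3) by (simp add: mult_le_0_iff)
  moreover have "e s \<le> M"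
    unfolding M_def by (rule Max_ge) auto
  ultimately show ?thesis by simp
qed

lemma min_dev_eq_minimum:
  assumes "P \<in> unc_set D \<beta> Po s a" "\<And>Q. Q \<in> unc_set D \<beta> Po s a \<Longrightarrow> ip P V \<le> ip Q V"
  shows "min_dev D \<beta> Po s a V = ip P V - ip (Po s a) V"
  unfolding min_dev_def ip_diff_left using assms by (intro cInf_eq_minimum) auto

text \<open>The excess of the return of the greedy stationary kernel over V is nonnegative and at
  most its own discounted average, hence zero.\<close>
theorem robust_value_bellman:
  fixes D :: "('s::finite \<Rightarrow> real) \<Rightarrow> ('s \<Rightarrow> real) \<Rightarrow> real" and \<beta> :: "'s \<Rightarrow> 'a \<Rightarrow> real"
    and Po :: "'s \<Rightarrow> 'a \<Rightarrow> 's \<Rightarrow> real" and \<gamma> :: real and \<pi> :: "'s \<Rightarrow> 'a"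
    and u :: "'s \<Rightarrow> 'a \<Rightarrow> real"
  defines "V \<equiv> robust_value D \<beta> Po \<gamma> \<pi> u"
  assumes gamma: "0 \<le> \<gamma>" "\<gamma> < 1"
    and min_attained: "\<And>s a. \<exists>P\<in>unc_set D \<beta> Po s a. \<forall>Q\<in>unc_set D \<beta> Po s a. ip P V \<le> ip Q V"
  shows "V s = u s (\<pi> s) + \<gamma> * ip (Po s (\<pi> s)) V + \<gamma> * min_dev D \<beta> Po s (\<pi> s) V"
proof -
  obtain Pm where Pm_in: "\<And>s a. Pm s a \<in> unc_set D \<beta> Po s a"
    and Pm_min: "\<And>s a Q. Q \<in> unc_set D \<beta> Po s a \<Longrightarrow> ip (Pm s a) V \<le> ip Q V"
    using min_attained by metis
  define R where "R = disc_return \<gamma> (\<lambda>_. Pm) \<pi> u"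
  have stationary: "(\<lambda>_. Pm) \<in> admissible_kernels D \<beta> Po"
    unfolding admissible_kernels_def using Pm_in by blast
  have Pm_prob: "Pm s a \<in> prob_simplex" for s a
    using admissible_kernel_in_prob_simplex[OF stationary] .
  have R_unfold: "R s = u s (\<pi> s) + \<gamma> * ip (Pm s (\<pi> s)) R" for s
    unfolding R_def by (rule disc_return_unfold[where K = "\<lambda>_. Pm", OF Pm_prob gamma])
  have V_ge: "u s (\<pi> s) + \<gamma> * ip (Pm s (\<pi> s)) V \<le> V s" for s
    using gamma stationary Pm_min unfolding V_def by (intro robust_value_ge_one_step) auto
  have "R s - V s \<le> 0" for s
  proof (rule nonpos_if_le_discounted_average[OF Pm_prob gamma])
    show "R s - V s \<le> \<gamma> * ip (Pm s (\<pi> s)) (\<lambda>s. R s - V s)" for s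
      using R_unfold[of s] V_ge[of s] by (simp add: ip_diff_right right_diff_distrib)
  qed
  moreover have "V s \<le> R s" for s
    unfolding V_def R_def using gamma stationary by (rule robust_value_le_disc_return)
  ultimately have "R = V"
    by (intro ext antisym) (auto simp: algebra_simps)
  moreover have "min_dev D \<beta> Po s (\<pi> s) V = ip (Pm s (\<pi> s)) V - ip (Po s (\<pi> s)) V"
    by (rule min_dev_eq_minimum[OF Pm_in Pm_min])
  ultimately show ?thesis
    using R_unfold[of s] by (simp add: right_diff_distrib)
qed

section \<open>Affine averaging operators\<close>

locale affine_averaging_operator =
  fixes F :: "('s::finite \<Rightarrow> real) \<Rightarrow> 's \<Rightarrow> real" and c :: real and p :: "'s \<Rightarrow> 's \<Rightarrow> real"
  assumes affine: "\<And>v s. F v s = F (\<lambda>_. 0) s + c * ip (p s) v"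
    and prob: "\<And>s. p s \<in> prob_simplex"
    and nonneg: "0 \<le> c"
begin

lemma monotone: "(\<And>s. v s \<le> w s) \<Longrightarrow> F v s \<le> F w s"
  using affine[of v s] affine[of w s] ip_mono[OF prob] nonneg by (simp add: mult_left_mono)

lemma add_const: "F (\<lambda>s. v s + k) = (\<lambda>s. F v s + c * k)"
proof
  fix s
  show "F (\<lambda>s. v s + k) s = F v s + c * k"
    using affine[of "\<lambda>s. v s + k" s] affine[of v s] ip_add_const[OF prob] by (simp add: algebra_simps)
qed

lemma sup_norm_diff_le: "sup_norm (\<lambda>s. F v s - F w s) \<le> c * sup_norm (\<lambda>s. v s - w s)"
proof (rule sup_norm_le)
  fix s
  have "F v s - F w s = c * ip (p s) (\<lambda>s. v s - w s)"
    using affine[of v s] affine[of w s] by (simp add: ip_diff_right right_diff_distrib)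
  then have "\<bar>F v s - F w s\<bar> = c * \<bar>ip (p s) (\<lambda>s. v s - w s)\<bar>"
    using nonneg by (simp add: abs_mult)
  also have "\<dots> \<le> c * sup_norm (\<lambda>s. v s - w s)"
    by (rule mult_left_mono[OF abs_ip_le_sup_norm[OF prob] nonneg])
  finally show "\<bar>F v s - F w s\<bar> \<le> c * sup_norm (\<lambda>s. v s - w s)" .
qed

lemma fixed_point_unique:
  assumes "c < 1" "F v = v" "F w = w"
  shows "v = w"
proof -
  let ?n = "sup_norm (\<lambda>s. v s - w s)"
  have "?n \<le> c * ?n"
    using sup_norm_diff_le[of v w] assms(2,3) by simp
  then have "(1 - c) * ?n \<le> 0"
    by (simp add: algebra_simps)
  then have "?n \<le> 0"
    using assms(1) by (simp add: mult_le_0_iff)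
  then show "v = w"
    by (intro ext) (metis abs_le_sup_norm abs_le_zero_iff order_trans eq_iff_diff_eq_0)
qed

end

section \<open>The operator T1\<close>

lemma T1_op_affine:
  "T1_op D \<beta> Po \<gamma> h r m g lam \<pi> v s =
     T1_op D \<beta> Po \<gamma> h r m g lam \<pi> (\<lambda>_. 0) s + \<gamma> * (1 - h) * ip (Po s (\<pi> s)) v"
  unfolding T1_op_def T_op_def by (simp add: ip_add_right ip_diff_right ip_zero_right algebra_simps)

lemma T1_op_fixed_point:
  fixes D :: "('s::finite \<Rightarrow> real) \<Rightarrow> ('s \<Rightarrow> real) \<Rightarrow> real" and \<beta> :: "'s \<Rightarrow> 'a \<Rightarrow> real"
    and Po :: "'s \<Rightarrow> 'a \<Rightarrow> 's \<Rightarrow> real" and \<gamma> :: real and \<pi> :: "'s \<Rightarrow> 'a"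
    and r :: "'s \<Rightarrow> 'a \<Rightarrow> real" and g :: "nat \<Rightarrow> 's \<Rightarrow> 'a \<Rightarrow> real"
  defines "Vr \<equiv> robust_value D \<beta> Po \<gamma> \<pi> r"
    and "Vg \<equiv> \<lambda>i. robust_value D \<beta> Po \<gamma> \<pi> (g i)"
  assumes bellman_r: "\<And>s.
          Vr s = r s (\<pi> s) + \<gamma> * ip (Po s (\<pi> s)) Vr + \<gamma> * min_dev D \<beta> Po s (\<pi> s) Vr"
    and bellman_g: "\<And>i s. i < m \<Longrightarrow>
          Vg i s = g i s (\<pi> s) + \<gamma> * ip (Po s (\<pi> s)) (Vg i) + \<gamma> * min_dev D \<beta> Po s (\<pi> s) (Vg i)"
  shows "T1_op D \<beta> Po \<gamma> h r m g lam \<pi> (\<lambda>s. Vr s - (\<Sum>i<m. lam i * Vg i s))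
           = (\<lambda>s. Vr s - (\<Sum>i<m. lam i * Vg i s))"
proof
  fix s
  let ?p = "Po s (\<pi> s)" and ?md = "min_dev D \<beta> Po s (\<pi> s)"
  have sum_g: "(\<Sum>i<m. lam i * Vg i s) = (\<Sum>i<m. lam i * g i s (\<pi> s))
      + \<gamma> * (\<Sum>i<m. lam i * ip ?p (Vg i)) + \<gamma> * (\<Sum>i<m. lam i * ?md (Vg i))"
    using bellman_g by (simp add: algebra_simps sum.distrib sum_distrib_left)
  have "T1_op D \<beta> Po \<gamma> h r m g lam \<pi> (\<lambda>s. Vr s - (\<Sum>i<m. lam i * Vg i s)) s
      = r s (\<pi> s) - (\<Sum>i<m. lam i * g i s (\<pi> s))
        + \<gamma> * (ip ?p Vr - (\<Sum>i<m. lam i * ip ?p (Vg i)))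
        + \<gamma> * ?md Vr - \<gamma> * (\<Sum>i<m. lam i * ?md (Vg i))"
    unfolding T1_op_def T_op_def Vr_def Vg_def
    by (simp add: ip_diff_right ip_sum_right ip_zero_right)
  also have "\<dots> = Vr s - (\<Sum>i<m. lam i * Vg i s)"
    using bellman_r[of s] sum_g by (simp add: algebra_simps)
  finally show "T1_op D \<beta> Po \<gamma> h r m g lam \<pi> (\<lambda>s. Vr s - (\<Sum>i<m. lam i * Vg i s)) s
      = Vr s - (\<Sum>i<m. lam i * Vg i s)" .
qed

theorem proposition6:
  fixes D :: "('s::finite \<Rightarrow> real) \<Rightarrow> ('s \<Rightarrow> real) \<Rightarrow> real"
    and \<beta> :: "'s \<Rightarrow> 'a::finite \<Rightarrow> real"
    and Po :: "'s \<Rightarrow> 'a \<Rightarrow> 's \<Rightarrow> real"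
    and \<gamma> h Rbar :: real
    and r :: "'s \<Rightarrow> 'a \<Rightarrow> real"
    and m :: nat
    and g :: "nat \<Rightarrow> 's \<Rightarrow> 'a \<Rightarrow> real"
    and \<tau> :: "nat \<Rightarrow> real"
    and lam :: "nat \<Rightarrow> real"
    and \<pi> :: "'s \<Rightarrow> 'a"
  assumes gamma: "0 \<le> \<gamma>" "\<gamma> < 1"
    and h: "0 \<le> h" "h < 1"
    and nominal: "\<And>s a. Po s a \<in> prob_simplex"
    and min_attained: "\<And>s a (V :: 's \<Rightarrow> real).
          \<exists>P\<in>unc_set D \<beta> Po s a. \<forall>Q\<in>unc_set D \<beta> Po s a.
             ip (\<lambda>s'. P s' - Po s a s') V \<le> ip (\<lambda>s'. Q s' - Po s a s') V"
    and r_bnd: "\<And>s a. 0 \<le> r s a \<and> r s a \<le> Rbar"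
    and g_bnd: "\<And>i s a. i < m \<Longrightarrow> 0 \<le> g i s a \<and> g i s a \<le> \<tau> i"
    and lam: "\<And>i. i < m \<Longrightarrow> 0 \<le> lam i"
  defines "T1 \<equiv> T1_op D \<beta> Po \<gamma> h r m g lam \<pi>"
    and "Vstar \<equiv> (\<lambda>s. robust_value D \<beta> Po \<gamma> \<pi> r s
                     - (\<Sum>i<m. lam i * robust_value D \<beta> Po \<gamma> \<pi> (g i) s))"
  shows "(\<forall>v1 v2. (\<forall>s. v2 s \<le> v1 s) \<longrightarrow> (\<forall>s. T1 v2 s \<le> T1 v1 s))
       \<and> (\<forall>v c. T1 (\<lambda>s. v s + c) = (\<lambda>s. T1 v s + \<gamma> * (1 - h) * c))
       \<and> (\<forall>v w. sup_norm (\<lambda>s. T1 v s - T1 w s) \<le> \<gamma> * (1 - h) * sup_norm (\<lambda>s. v s - w s))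
       \<and> T1 Vstar = Vstar
       \<and> (\<forall>v. T1 v = v \<longrightarrow> v = Vstar)"
proof -
  interpret T1: affine_averaging_operator T1 "\<gamma> * (1 - h)" "\<lambda>s. Po s (\<pi> s)"
  proof
    show "T1 v s = T1 (\<lambda>_. 0) s + \<gamma> * (1 - h) * ip (Po s (\<pi> s)) v" for v s
      unfolding T1_def by (rule T1_op_affine)
  qed (use nominal gamma h in auto)
  have contraction: "\<gamma> * (1 - h) < 1"
    using mult_left_le[of "1 - h" \<gamma>] gamma h by linarith
  have bellman: "robust_value D \<beta> Po \<gamma> \<pi> u s = u s (\<pi> s)
      + \<gamma> * ip (Po s (\<pi> s)) (robust_value D \<beta> Po \<gamma> \<pi> u)
      + \<gamma> * min_dev D \<beta> Po s (\<pi> s) (robust_value D \<beta> Po \<gamma> \<pi> u)" for u s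
    using gamma min_attained by (intro robust_value_bellman) (simp_all add: ip_diff_left)
  have fixed: "T1 Vstar = Vstar"
    unfolding T1_def Vstar_def by (rule T1_op_fixed_point) (rule bellman)+
  show ?thesis
    using T1.monotone T1.add_const T1.sup_norm_diff_le fixed
      T1.fixed_point_unique[OF contraction _ fixed]
    by blast
qed

end
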